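(* On a dynamic surface $\Sigma_t$, the temporal curvature tensor $\dot R^\beta_{\ \alpha\gamma}=\partial_t\Gamma^\beta_{\alpha\gamma}+R^\beta_{\ \gamma\alpha\delta}V^\delta-\nabla_\alpha\dot\Gamma^\beta_\gamma$ satisfies $$\dot R^\beta_{\ \alpha\gamma}=\nabla^\beta\!\left(CB_{\alpha\gamma}\right)-\nabla_\gamma\!\left(CB^\beta_\alpha\right)=B_{\alpha\gamma}\nabla^\beta C-B^\beta_\alpha\nabla_\gamma C .$$ Consequently, for every smooth contravariant surface field $\psi^\beta$, $(\dot\nabla\nabla_\alpha-\nabla_\alpha\dot\nabla-CB^\gamma_\alpha\nabla_\gamma)\psi^\beta=(B_{\alpha\gamma}\nabla^\beta C-B^\beta_\alpha\nabla_\gamma C)\psi^\gamma$.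
   Context: Setting: $\Sigma_t$ is a smooth one-parameter family of 2-dimensional surfaces in Euclidean 3-space given by $\mathbf R(S^1,S^2,t)$ in surface coordinates $S^\alpha$; $\mathbf S_\alpha=\partial_\alpha\mathbf R$, metric $S_{\alpha\beta}=\mathbf S_\alpha\cdot\mathbf S_\beta$ with inverse $S^{\alpha\beta}$ (used to raise/lower indices), $\mathbf S^\alpha=S^{\alpha\beta}\mathbf S_\beta$, unit normal $\mathbf N$, Christoffel symbols $\Gamma^\gamma_{\alpha\beta}=\mathbf S^\gamma\cdot\partial_\alpha\mathbf S_\beta$, surface covariant derivative $\nabla_\alpha$, curvature tensor $B_{\alpha\beta}=\mathbf N\cdot\nabla_\alpha\mathbf S_\beta$. The Riemann tensor is defined by $(\nabla_\alpha\nabla_\beta-\nabla_\beta\nabla_\alpha)\psi^\gamma=R^\gamma_{\ \delta\alpha\beta}\psi^\delta$. Velocity $\mathbf V=\partial_t\mathbf R$ at fixed $S^\alpha$, $C=\mathbf V\cdot\mathbf N$, $V^\alpha=\mathbf V\cdot\mathbf S^\alpha$. Christoffel time symbol $\dot\Gamma^\alpha_\beta=\nabla_\beta V^\alpha-CB^\alpha_\beta$. Invariant time derivative: $\dot\nabla\psi=\partial_t\psi-V^\alpha\nabla_\alpha\psi$ on scalars, $\dot\nabla\psi^\alpha=\partial_t\psi^\alpha-V^\gamma\nabla_\gamma\psi^\alpha+\dot\Gamma^\alpha_\gamma\psi^\gamma$, $\dot\nabla\psi_\alpha=\partial_t\psi_\alpha-V^\gamma\nabla_\gamma\psi_\alpha-\dot\Gamma^\gamma_\alpha\psi_\gamma$,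 one term per index for higher rank. *)

theory Defs
  imports "HOL-Analysis.Analysis" "HOL-Analysis.Cross3"
begin

(* Points of parameter space: (S^1, S^2, t).  Coordinate index 0 = S^1, 1 = S^2, 2 = t.
   Surface indices alpha, beta, ... range over {0,1}; all index sums are over {..<2}. *)
type_synonym pt = "real \<times> real \<times> real"

definition coord :: "nat \<Rightarrow> pt \<Rightarrow> real" where
  "coord i p = (if i = 0 then fst p else if i = 1 then fst (snd p) else snd (snd p))"

definition setc :: "nat \<Rightarrow> real \<Rightarrow> pt \<Rightarrow> pt" where
  "setc i s p = (if i = 0 then (s, snd p) else if i = 1 then (fst p, s, snd (snd p))
                 else (fst p, fst (snd p), s))"

definition pd :: "nat \<Rightarrow> (pt \<Rightarrow> 'a::real_normed_vector) \<Rightarrow> pt \<Rightarrow> 'a" where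
  "pd i f p = vector_derivative (\<lambda>s. f (setc i s p)) (at (coord i p))"

fun Ck :: "nat \<Rightarrow> pt set \<Rightarrow> (pt \<Rightarrow> 'a::real_normed_vector) \<Rightarrow> bool" where
  "Ck 0 U f = continuous_on U f"
| "Ck (Suc k) U f = (continuous_on U f \<and>
      (\<forall>i<3. \<forall>p\<in>U. (\<lambda>s. f (setc i s p)) differentiable (at (coord i p))) \<and>
      (\<forall>i<3. Ck k U (pd i f)))"

definition smooth_fn :: "pt set \<Rightarrow> (pt \<Rightarrow> 'a::real_normed_vector) \<Rightarrow> bool" where
  "smooth_fn U f = (\<forall>k. Ck k U f)"

definition Sv :: "(pt \<Rightarrow> real^3) \<Rightarrow> nat \<Rightarrow> pt \<Rightarrow> real^3" where
  "Sv R a = pd a R"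

definition metric :: "(pt \<Rightarrow> real^3) \<Rightarrow> nat \<Rightarrow> nat \<Rightarrow> pt \<Rightarrow> real" where
  "metric R a b p = Sv R a p \<bullet> Sv R b p"

definition metric_det :: "(pt \<Rightarrow> real^3) \<Rightarrow> pt \<Rightarrow> real" where
  "metric_det R p = metric R 0 0 p * metric R 1 1 p - metric R 0 1 p * metric R 1 0 p"

(* inverse of the 2x2 metric S^{ab} *)
definition metric_inv :: "(pt \<Rightarrow> real^3) \<Rightarrow> nat \<Rightarrow> nat \<Rightarrow> pt \<Rightarrow> real" where
  "metric_inv R a b p =
     (if a = b then metric R (1 - a) (1 - a) p else - metric R a b p) / metric_det R p"

definition Sup :: "(pt \<Rightarrow> real^3) \<Rightarrow> nat \<Rightarrow> pt \<Rightarrow> real^3" where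
  "Sup R a p = (\<Sum>b<2. metric_inv R a b p *\<^sub>R Sv R b p)"

definition Nrm :: "(pt \<Rightarrow> real^3) \<Rightarrow> pt \<Rightarrow> real^3" where
  "Nrm R p = (let c = cross3 (Sv R 0 p) (Sv R 1 p) in c /\<^sub>R norm c)"

definition Chr :: "(pt \<Rightarrow> real^3) \<Rightarrow> nat \<Rightarrow> nat \<Rightarrow> nat \<Rightarrow> pt \<Rightarrow> real" where
  "Chr R c a b p = Sup R c p \<bullet> pd a (Sv R b) p"

definition cov_basis :: "(pt \<Rightarrow> real^3) \<Rightarrow> nat \<Rightarrow> nat \<Rightarrow> pt \<Rightarrow> real^3" where
  "cov_basis R a b p = pd a (Sv R b) p - (\<Sum>c<2. Chr R c a b p *\<^sub>R Sv R c p)"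

definition Bcurv :: "(pt \<Rightarrow> real^3) \<Rightarrow> nat \<Rightarrow> nat \<Rightarrow> pt \<Rightarrow> real" where
  "Bcurv R a b p = Nrm R p \<bullet> cov_basis R a b p"

definition Bmixed :: "(pt \<Rightarrow> real^3) \<Rightarrow> nat \<Rightarrow> nat \<Rightarrow> pt \<Rightarrow> real" where
  "Bmixed R b a p = (\<Sum>c<2. metric_inv R b c p * Bcurv R c a p)"

definition Vel :: "(pt \<Rightarrow> real^3) \<Rightarrow> pt \<Rightarrow> real^3" where
  "Vel R p = pd 2 R p"

definition Cn :: "(pt \<Rightarrow> real^3) \<Rightarrow> pt \<Rightarrow> real" where
  "Cn R p = Vel R p \<bullet> Nrm R p"

definition Vup :: "(pt \<Rightarrow> real^3) \<Rightarrow> nat \<Rightarrow> pt \<Rightarrow> real" where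
  "Vup R a p = Vel R p \<bullet> Sup R a p"

(* Covariant derivatives of surface tensor fields (components as functions on pt).
   Contravariant field psi: psi b = psi^b.  Rank-2 fields T: T i j. *)
definition cov_up :: "(pt \<Rightarrow> real^3) \<Rightarrow> nat \<Rightarrow> (nat \<Rightarrow> pt \<Rightarrow> real) \<Rightarrow> nat \<Rightarrow> pt \<Rightarrow> real" where
  "cov_up R a psi b p = pd a (psi b) p + (\<Sum>c<2. Chr R b a c p * psi c p)"

definition cov_ll :: "(pt \<Rightarrow> real^3) \<Rightarrow> nat \<Rightarrow> (nat \<Rightarrow> nat \<Rightarrow> pt \<Rightarrow> real) \<Rightarrow> nat \<Rightarrow> nat \<Rightarrow> pt \<Rightarrow> real" where
  "cov_ll R a T b c p = pd a (T b c) p - (\<Sum>d<2. Chr R d a b p * T d c p)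
                                       - (\<Sum>d<2. Chr R d a c p * T b d p)"

(* nabla_a T^b_c, where T b c = T^b_c *)
definition cov_ul :: "(pt \<Rightarrow> real^3) \<Rightarrow> nat \<Rightarrow> (nat \<Rightarrow> nat \<Rightarrow> pt \<Rightarrow> real) \<Rightarrow> nat \<Rightarrow> nat \<Rightarrow> pt \<Rightarrow> real" where
  "cov_ul R a T b c p = pd a (T b c) p + (\<Sum>d<2. Chr R b a d p * T d c p)
                                       - (\<Sum>d<2. Chr R d a c p * T b d p)"

definition grad_up :: "(pt \<Rightarrow> real^3) \<Rightarrow> nat \<Rightarrow> (pt \<Rightarrow> real) \<Rightarrow> pt \<Rightarrow> real" where
  "grad_up R b f p = (\<Sum>c<2. metric_inv R b c p * pd c f p)"

definition Chr_dot :: "(pt \<Rightarrow> real^3) \<Rightarrow> nat \<Rightarrow> nat \<Rightarrow> pt \<Rightarrow> real" where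
  "Chr_dot R a b p = cov_up R b (Vup R) a p - Cn R p * Bmixed R a b p"

definition tder_up :: "(pt \<Rightarrow> real^3) \<Rightarrow> (nat \<Rightarrow> pt \<Rightarrow> real) \<Rightarrow> nat \<Rightarrow> pt \<Rightarrow> real" where
  "tder_up R psi b p = pd 2 (psi b) p - (\<Sum>c<2. Vup R c p * cov_up R c psi b p)
                       + (\<Sum>c<2. Chr_dot R b c p * psi c p)"

definition tder_ul :: "(pt \<Rightarrow> real^3) \<Rightarrow> (nat \<Rightarrow> nat \<Rightarrow> pt \<Rightarrow> real) \<Rightarrow> nat \<Rightarrow> nat \<Rightarrow> pt \<Rightarrow> real" where
  "tder_ul R T b a p = pd 2 (T b a) p - (\<Sum>c<2. Vup R c p * cov_ul R c T b a p)
                       + (\<Sum>c<2. Chr_dot R b c p * T c a p)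
                       - (\<Sum>c<2. Chr_dot R c a p * T b c p)"

(* Riemann tensor R^g_{dab}, the component expression of the defining identity
   (nabla_a nabla_b - nabla_b nabla_a) psi^g = R^g_{dab} psi^d *)
definition Riem :: "(pt \<Rightarrow> real^3) \<Rightarrow> nat \<Rightarrow> nat \<Rightarrow> nat \<Rightarrow> nat \<Rightarrow> pt \<Rightarrow> real" where
  "Riem R g d a b p = pd a (Chr R g b d) p - pd b (Chr R g a d) p
      + (\<Sum>e<2. Chr R g a e p * Chr R e b d p) - (\<Sum>e<2. Chr R g b e p * Chr R e a d p)"

definition Rdot :: "(pt \<Rightarrow> real^3) \<Rightarrow> nat \<Rightarrow> nat \<Rightarrow> nat \<Rightarrow> pt \<Rightarrow> real" where
  "Rdot R b a g p = pd 2 (Chr R b a g) p + (\<Sum>d<2. Riem R b g a d p * Vup R d p)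
                    - cov_ul R a (Chr_dot R) b g p"

end

theory Submission
  imports Defs
begin

text \<open>
  Treat the time \<open>t\<close> as a third coordinate (index 2) and decompose every derivative
  \<open>\<partial>\<^sub>i S\<^sub>g\<close>, \<open>i \<in> {S\<^sup>1, S\<^sup>2, t}\<close>, in the moving frame \<open>S\<^sub>1, S\<^sub>2, N\<close>.
  Symmetry of mixed partial derivatives of \<open>S\<^sub>g\<close> then yields the Gauss and Codazzi
  equations for all index pairs, including the time index.  The Christoffel time symbol is
  exactly the mixed symbol \<open>\<Gamma>\<^sup>c\<^sub>t\<^sub>g\<close>, and the normal component of \<open>\<partial>\<^sub>t S\<^sub>g\<close> is
  \<open>\<nabla>\<^sub>g C + B\<^sub>d\<^sub>g V\<^sup>d\<close>; substituting both into the Gauss equation with one time index gives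
  \<open>Rdot\<^sup>\<beta>\<^sub>\<alpha>\<^sub>\<gamma> = B\<^sub>\<alpha>\<^sub>\<gamma> \<nabla>\<^sup>\<beta> C - B\<^sup>\<beta>\<^sub>\<alpha> \<nabla>\<^sub>\<gamma> C\<close>.  The divergence form follows from the
  Codazzi equation and metric compatibility, and the commutator identity is a direct
  expansion in which the curvature terms assemble into \<open>Rdot\<close>.
\<close>

lemma less_3_cases: "(i::nat) < 3 \<Longrightarrow> i = 0 \<or> i = 1 \<or> i = 2" by auto

lemma coord_setc: "i < 3 \<Longrightarrow> j < 3 \<Longrightarrow> coord i (setc j s p) = (if i = j then s else coord i p)"
  by (drule less_3_cases, drule less_3_cases) (auto simp: coord_def setc_def)

lemma coord_setc_same [simp]: "coord i (setc i s p) = s"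
  by (auto simp: coord_def setc_def)

lemma setc_setc_same [simp]: "setc i s (setc i t p) = setc i s p"
  by (auto simp: setc_def)

lemma setc_coord [simp]: "setc i (coord i p) p = p"
  by (auto simp: coord_def setc_def)

lemma setc_commute: "i < 3 \<Longrightarrow> j < 3 \<Longrightarrow> i \<noteq> j \<Longrightarrow> setc i s (setc j t p) = setc j t (setc i s p)"
  by (drule less_3_cases, drule less_3_cases) (auto simp: setc_def)

lemma dist_setc: "i < 3 \<Longrightarrow> dist (setc i s p) p = \<bar>s - coord i p\<bar>"
  by (cases p, drule less_3_cases)
     (auto simp: setc_def coord_def dist_Pair_Pair dist_real_def)

lemma eventually_setc_in_open:
  assumes "open U" "p \<in> U" "i < 3"
  shows "eventually (\<lambda>s. setc i s p \<in> U) (nhds (coord i p))"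
proof -
  obtain r where r: "r > 0" "ball p r \<subseteq> U" using assms open_contains_ball by blast
  have "setc i s p \<in> U" if "dist s (coord i p) < r" for s
    using that r(2) dist_setc[OF assms(3), of s p] by (auto simp: dist_commute dist_real_def)
  then show ?thesis unfolding eventually_nhds_metric using r(1) by blast
qed

lemma has_vector_derivative_setc_cong:
  assumes "open U" "p \<in> U" "i < 3" "\<forall>q\<in>U. f q = g q"
  shows "((\<lambda>s. f (setc i s p)) has_vector_derivative D) (at (coord i p))
     \<longleftrightarrow> ((\<lambda>s. g (setc i s p)) has_vector_derivative D) (at (coord i p))"
proof -
  have "eventually (\<lambda>s. s \<in> UNIV \<longrightarrow> f (setc i s p) = g (setc i s p)) (nhds (coord i p))"
    using eventually_setc_in_open[OF assms(1-3)] assms(4) by (simp add: eventually_mono)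
  from has_vector_derivative_cong_ev[OF this] show ?thesis using assms by simp
qed

lemma pd_cong:
  assumes "open U" "p \<in> U" "i < 3" "\<forall>q\<in>U. f q = g q"
  shows "pd i f p = pd i g p"
  unfolding pd_def vector_derivative_def
  using has_vector_derivative_setc_cong[OF assms] by presburger

lemma differentiable_setc_cong:
  assumes "open U" "p \<in> U" "i < 3" "\<forall>q\<in>U. f q = g q"
  shows "(\<lambda>s. f (setc i s p)) differentiable (at (coord i p))
     \<longleftrightarrow> (\<lambda>s. g (setc i s p)) differentiable (at (coord i p))"
  using has_vector_derivative_setc_cong[OF assms]
  by (metis differentiableI_vector vector_derivative_works)

lemma pd_eqI:
  "((\<lambda>s. f (setc i s p)) has_vector_derivative D) (at (coord i p)) \<Longrightarrow> pd i f p = D"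
  unfolding pd_def by (rule vector_derivative_at)

lemma Ck_has_pd:
  assumes "Ck (Suc k) U f" "p \<in> U" "i < 3"
  shows "((\<lambda>s. f (setc i s p)) has_vector_derivative pd i f p) (at (coord i p))"
  using assms vector_derivative_works by (auto simp: pd_def)

lemma Ck_Suc_imp_Ck: "Ck (Suc k) U f \<Longrightarrow> Ck k U f"
proof (induction k arbitrary: f)
  case (Suc k)
  then show ?case by (metis Ck.simps(2))
qed simp

lemma Ck_cong:
  assumes "open U"
  shows "Ck k U f \<Longrightarrow> \<forall>q\<in>U. f q = g q \<Longrightarrow> Ck k U g"
proof (induction k arbitrary: f g)
  case 0
  then show ?case using continuous_on_cong[of U U f g] by simp
next
  case (Suc k)
  have "\<forall>i<3. \<forall>q\<in>U. pd i f q = pd i g q"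
    using pd_cong[OF assms _ _ Suc.prems(2)] by blast
  then show ?case
    using Suc continuous_on_cong[of U U f g] differentiable_setc_cong[OF assms _ _ Suc.prems(2)]
    by simp blast
qed

lemma Ck_of_derivatives:
  assumes "open U" and cont: "continuous_on U g"
    and deriv: "\<And>i p. i < 3 \<Longrightarrow> p \<in> U \<Longrightarrow>
                  ((\<lambda>s. g (setc i s p)) has_vector_derivative g' i p) (at (coord i p))"
    and smooth: "\<And>i. i < 3 \<Longrightarrow> Ck k U (g' i)"
  shows "Ck (Suc k) U g"
proof -
  have "\<forall>q\<in>U. g' i q = pd i g q" if "i < 3" for i
    using deriv[OF that] pd_eqI by (metis)
  then have "Ck k U (pd i g)" if "i < 3" for i
    using Ck_cong[OF assms(1) smooth[OF that]] that by blast
  moreover have "\<forall>i<3. \<forall>p\<in>U. (\<lambda>s. g (setc i s p)) differentiable (at (coord i p))"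
    using deriv differentiableI_vector by blast
  ultimately show ?thesis using cont by simp
qed

lemma Ck_const: "Ck k U (\<lambda>q. c)"
proof (induction k arbitrary: c)
  case (Suc k)
  have "pd i (\<lambda>q. c) = (\<lambda>q. 0)" for i
    by (rule ext, rule pd_eqI) simp
  then show ?case using Suc by simp
qed simp

lemma Ck_add:
  assumes U: "open U"
  shows "Ck k U f \<Longrightarrow> Ck k U g \<Longrightarrow> Ck k U (\<lambda>q. f q + g q)"
proof (induction k arbitrary: f g)
  case (Suc k)
  show ?case
  proof (rule Ck_of_derivatives[OF U, where g' = "\<lambda>i q. pd i f q + pd i g q"])
    show "continuous_on U (\<lambda>q. f q + g q)" using Suc.prems by (simp add: continuous_on_add)
    show "((\<lambda>s. f (setc i s p) + g (setc i s p)) has_vector_derivative pd i f p + pd i g p)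
            (at (coord i p))" if "i < 3" "p \<in> U" for i p
      using Ck_has_pd[OF Suc.prems(1) that(2,1)] Ck_has_pd[OF Suc.prems(2) that(2,1)]
      by (rule has_vector_derivative_add)
    show "Ck k U (\<lambda>q. pd i f q + pd i g q)" if "i < 3" for i
      using Suc that by simp
  qed
qed (simp add: continuous_on_add)

lemma Ck_diff:
  assumes U: "open U"
  shows "Ck k U f \<Longrightarrow> Ck k U g \<Longrightarrow> Ck k U (\<lambda>q. f q - g q)"
proof (induction k arbitrary: f g)
  case (Suc k)
  show ?case
  proof (rule Ck_of_derivatives[OF U, where g' = "\<lambda>i q. pd i f q - pd i g q"])
    show "continuous_on U (\<lambda>q. f q - g q)" using Suc.prems by (simp add: continuous_on_diff)
    show "((\<lambda>s. f (setc i s p) - g (setc i s p)) has_vector_derivative pd i f p - pd i g p)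
            (at (coord i p))" if "i < 3" "p \<in> U" for i p
      using Ck_has_pd[OF Suc.prems(1) that(2,1)] Ck_has_pd[OF Suc.prems(2) that(2,1)]
      by (rule has_vector_derivative_diff)
    show "Ck k U (\<lambda>q. pd i f q - pd i g q)" if "i < 3" for i
      using Suc that by simp
  qed
qed (simp add: continuous_on_diff)

lemma Ck_uminus: "open U \<Longrightarrow> Ck k U f \<Longrightarrow> Ck k U (\<lambda>q. - f q)"
  using Ck_diff[of U k "\<lambda>q. 0" f] by (simp add: Ck_const)

lemma Ck_sum:
  assumes U: "open U"
  shows "finite A \<Longrightarrow> (\<forall>x\<in>A. Ck k U (f x)) \<Longrightarrow> Ck k U (\<lambda>q. \<Sum>x\<in>A. f x q)"
  by (induction A rule: finite_induct) (simp_all add: Ck_const Ck_add[OF U])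

lemma (in bounded_bilinear) Ck_prod:
  assumes U: "open U"
  shows "Ck k U f \<Longrightarrow> Ck k U g \<Longrightarrow> Ck k U (\<lambda>q. prod (f q) (g q))"
proof (induction k arbitrary: f g)
  case (Suc k)
  show ?case
  proof (rule Ck_of_derivatives[OF U,
        where g' = "\<lambda>i q. prod (f q) (pd i g q) + prod (pd i f q) (g q)"])
    show "continuous_on U (\<lambda>q. prod (f q) (g q))" using Suc.prems by (simp add: continuous_on)
    show "((\<lambda>s. prod (f (setc i s p)) (g (setc i s p))) has_vector_derivative
            prod (f p) (pd i g p) + prod (pd i f p) (g p)) (at (coord i p))"
      if "i < 3" "p \<in> U" for i p
      using has_vector_derivative[OF Ck_has_pd[OF Suc.prems(1) that(2,1)]
                                     Ck_has_pd[OF Suc.prems(2) that(2,1)]]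
      by simp
    have "Ck k U f" "Ck k U g" using Suc.prems Ck_Suc_imp_Ck by blast+
    then show "Ck k U (\<lambda>q. prod (f q) (pd i g q) + prod (pd i f q) (g q))" if "i < 3" for i
      using Suc.prems that by (intro Ck_add[OF U] Suc.IH) auto
  qed
qed (simp add: continuous_on)

lemma Ck_inverse:
  assumes U: "open U" and nz: "\<forall>q\<in>U. f q \<noteq> 0"
  shows "Ck k U f \<Longrightarrow> Ck k U (\<lambda>q. inverse (f q :: real))"
proof (induction k)
  case (Suc k)
  show ?case
  proof (rule Ck_of_derivatives[OF U,
        where g' = "\<lambda>i q. - (inverse (f q) * pd i f q * inverse (f q))"])
    show "continuous_on U (\<lambda>q. inverse (f q))"
      using Suc.prems nz by (simp add: continuous_on_inverse)
    show "((\<lambda>s. inverse (f (setc i s p))) has_vector_derivative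
            - (inverse (f p) * pd i f p * inverse (f p))) (at (coord i p))"
      if "i < 3" "p \<in> U" for i p
    proof -
      have "((\<lambda>s. f (setc i s p)) has_real_derivative pd i f p) (at (coord i p))"
        using Ck_has_pd[OF Suc.prems that(2,1)]
        by (simp add: has_real_derivative_iff_has_vector_derivative)
      from DERIV_inverse'[OF this] show ?thesis
        using nz that by (simp add: has_real_derivative_iff_has_vector_derivative)
    qed
    show "Ck k U (\<lambda>q. - (inverse (f q) * pd i f q * inverse (f q)))" if "i < 3" for i
    proof -
      have "Ck k U (\<lambda>q. inverse (f q))" "Ck k U (pd i f)"
        using Suc that Ck_Suc_imp_Ck by auto
      then show ?thesis
        by (intro Ck_uminus[OF U] bounded_bilinear.Ck_prod[OF bounded_bilinear_mult U])
    qed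
  qed
qed (use nz in \<open>simp add: continuous_on_inverse\<close>)

lemma Ck_sqrt:
  assumes U: "open U" and pos: "\<forall>q\<in>U. f q > 0"
  shows "Ck k U f \<Longrightarrow> Ck k U (\<lambda>q. sqrt (f q))"
proof (induction k)
  case (Suc k)
  show ?case
  proof (rule Ck_of_derivatives[OF U,
        where g' = "\<lambda>i q. inverse (sqrt (f q)) / 2 * pd i f q"])
    show "continuous_on U (\<lambda>q. sqrt (f q))"
      using Suc.prems by (simp add: continuous_on_real_sqrt)
    show "((\<lambda>s. sqrt (f (setc i s p))) has_vector_derivative
            inverse (sqrt (f p)) / 2 * pd i f p) (at (coord i p))"
      if "i < 3" "p \<in> U" for i p
    proof -
      have "((\<lambda>s. f (setc i s p)) has_real_derivative pd i f p) (at (coord i p))"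
        using Ck_has_pd[OF Suc.prems that(2,1)]
        by (simp add: has_real_derivative_iff_has_vector_derivative)
      from DERIV_chain2[OF DERIV_real_sqrt this] show ?thesis
        using pos that by (simp add: has_real_derivative_iff_has_vector_derivative)
    qed
    have "Ck k U (\<lambda>q. inverse (sqrt (f q)))"
      using Suc Ck_Suc_imp_Ck pos by (intro Ck_inverse[OF U]) auto
    then show "Ck k U (\<lambda>q. inverse (sqrt (f q)) / 2 * pd i f q)" if "i < 3" for i
      using Suc.prems that unfolding divide_inverse
      by (intro bounded_bilinear.Ck_prod[OF bounded_bilinear_mult U] Ck_const) auto
  qed
qed (simp add: continuous_on_real_sqrt)


section \<open>Symmetry of second partial derivatives\<close>

lemma linearization_near_constant:
  fixes f :: "real \<Rightarrow> 'a::real_normed_vector"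
  assumes deriv: "\<And>s. \<bar>s - x0\<bar> < \<delta> \<Longrightarrow> (f has_vector_derivative f' s) (at s)"
    and near: "\<And>s. \<bar>s - x0\<bar> < \<delta> \<Longrightarrow> norm (f' s - L) \<le> e"
    and h: "\<bar>h\<bar> < \<delta>"
  shows "norm (f (x0 + h) - f x0 - h *\<^sub>R L) \<le> 3 * e * \<bar>h\<bar>"
proof -
  have \<delta>: "\<delta> > 0" using h by linarith
  have "norm (f (x0 + h) - f x0 - ((x0 + h) - x0) *\<^sub>R f' x0) \<le> norm ((x0 + h) - x0) * (2 * e)"
  proof (rule vector_differentiable_bound_linearization[where S = "ball x0 \<delta>"])
    fix s assume "s \<in> ball x0 \<delta>"
    then have s: "\<bar>s - x0\<bar> < \<delta>" by (simp add: dist_real_def abs_minus_commute)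
    show "(f has_vector_derivative f' s) (at s within ball x0 \<delta>)"
      using deriv[OF s] by (rule has_vector_derivative_at_within)
    show "norm (f' s - f' x0) \<le> 2 * e"
      using norm_triangle_ineq4[of "f' s - L" "f' x0 - L"] near[OF s] near[of x0] \<delta> by simp
  next
    show "closed_segment x0 (x0 + h) \<subseteq> ball x0 \<delta>"
      using h by (intro closed_segment_subset) (auto simp: dist_real_def)
    show "x0 \<in> ball x0 \<delta>" using \<delta> by simp
  qed
  moreover have "norm (h *\<^sub>R f' x0 - h *\<^sub>R L) \<le> \<bar>h\<bar> * e"
    using near[of x0] \<delta> by (simp add: scaleR_diff_right[symmetric] mult_left_mono)
  ultimately show ?thesis
    using norm_triangle_ineq[of "f (x0 + h) - f x0 - h *\<^sub>R f' x0" "h *\<^sub>R f' x0 - h *\<^sub>R L"]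
    by (simp add: algebra_simps)
qed

lemma second_difference_estimate:
  fixes f :: "pt \<Rightarrow> 'a::real_normed_vector"
  assumes U: "open U" and f: "Ck 2 U f" and p: "p \<in> U" and ij: "i < 3" "j < 3" "i \<noteq> j"
    and e: "\<epsilon> > 0"
  shows "\<exists>\<delta>>0. \<forall>h. \<bar>h\<bar> < \<delta> \<longrightarrow>
     norm (f (setc i (coord i p + h) (setc j (coord j p + h) p))
         - f (setc i (coord i p + h) (setc j (coord j p) p))
         - (f (setc i (coord i p) (setc j (coord j p + h) p)) - f (setc i (coord i p) (setc j (coord j p) p)))
         - (h * h) *\<^sub>R pd j (pd i f) p) \<le> 9 * \<epsilon> * (h * h)"
proof -
  define F where "F = pd j (pd i f)"
  define x0 where "x0 = coord i p"
  define y0 where "y0 = coord j p"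
  define \<Phi> where "\<Phi> s u = setc i s (setc j u p)" for s u
  have f1: "Ck (Suc 1) U f" and fi: "Ck (Suc 0) U (pd i f)" and Fc: "continuous_on U F"
    using f ij by (simp_all add: F_def numeral_2_eq_2)
  obtain r where r: "r > 0" "ball p r \<subseteq> U" using U p open_contains_ball by blast
  obtain d where d: "d > 0" "\<And>q. q \<in> U \<Longrightarrow> dist q p < d \<Longrightarrow> dist (F q) (F p) < \<epsilon>"
    using Fc p e unfolding continuous_on_iff by blast
  define \<delta> where "\<delta> = min r d / 2"
  have \<delta>: "\<delta> > 0" using r d by (simp add: \<delta>_def)
  have dist_\<Phi>: "dist (\<Phi> s u) p \<le> \<bar>s - x0\<bar> + \<bar>u - y0\<bar>" for s u
    using dist_triangle[of "\<Phi> s u" p "setc j u p"] dist_setc[OF ij(1), of s "setc j u p"]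
      dist_setc[OF ij(2), of u p] coord_setc[OF ij(1,2)] ij(3)
    by (simp add: \<Phi>_def x0_def y0_def)
  have in_U: "\<Phi> s u \<in> U" and near: "norm (F (\<Phi> s u) - F p) \<le> \<epsilon>"
    if "\<bar>s - x0\<bar> < \<delta>" "\<bar>u - y0\<bar> < \<delta>" for s u
  proof -
    have close: "dist (\<Phi> s u) p < min r d" using dist_\<Phi>[of s u] that by (simp add: \<delta>_def)
    then show "\<Phi> s u \<in> U" using r(2) by (auto simp: dist_commute)
    then show "norm (F (\<Phi> s u) - F p) \<le> \<epsilon>" using d(2) close by (fastforce simp: dist_norm)
  qed
  have \<Phi>_setc: "setc i s' (\<Phi> s u) = \<Phi> s' u" "setc j u' (\<Phi> s u) = \<Phi> s u'"
    and coord_\<Phi>: "coord i (\<Phi> s u) = s" "coord j (\<Phi> s u) = u" for s s' u u'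
    using setc_commute[OF ij(2,1)] coord_setc[OF ij(2,1)] ij(3) by (simp_all add: \<Phi>_def)
  have deriv_i: "((\<lambda>s. f (\<Phi> s u)) has_vector_derivative pd i f (\<Phi> s u)) (at s)"
    and deriv_j: "((\<lambda>u. pd i f (\<Phi> s u)) has_vector_derivative F (\<Phi> s u)) (at u)"
    if "\<bar>s - x0\<bar> < \<delta>" "\<bar>u - y0\<bar> < \<delta>" for s u
    using Ck_has_pd[OF f1 in_U[OF that] ij(1)] Ck_has_pd[OF fi in_U[OF that] ij(2)]
    by (simp_all add: \<Phi>_setc coord_\<Phi> F_def)
  show ?thesis
  proof (intro exI[of _ \<delta>] conjI allI impI \<delta>)
    fix h :: real assume h: "\<bar>h\<bar> < \<delta>"
    have inner: "norm (pd i f (\<Phi> s (y0 + h)) - pd i f (\<Phi> s y0) - h *\<^sub>R F p) \<le> 3 * \<epsilon> * \<bar>h\<bar>"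
      if s: "\<bar>s - x0\<bar> < \<delta>" for s
      using deriv_j[OF s] near[OF s] h by (rule linearization_near_constant)
    have "norm ((f (\<Phi> (x0 + h) (y0 + h)) - f (\<Phi> (x0 + h) y0)) - (f (\<Phi> x0 (y0 + h)) - f (\<Phi> x0 y0))
              - h *\<^sub>R (h *\<^sub>R F p)) \<le> 3 * (3 * \<epsilon> * \<bar>h\<bar>) * \<bar>h\<bar>"
    proof (rule linearization_near_constant[OF _ _ h])
      fix s assume s: "\<bar>s - x0\<bar> < \<delta>"
      have "\<bar>(y0 + h) - y0\<bar> < \<delta>" "\<bar>y0 - y0\<bar> < \<delta>" using h \<delta> by auto
      then show "((\<lambda>s. f (\<Phi> s (y0 + h)) - f (\<Phi> s y0)) has_vector_derivative
          pd i f (\<Phi> s (y0 + h)) - pd i f (\<Phi> s y0)) (at s)"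
        using deriv_i[OF s] by (intro has_vector_derivative_diff)
      show "norm (pd i f (\<Phi> s (y0 + h)) - pd i f (\<Phi> s y0) - h *\<^sub>R F p) \<le> 3 * \<epsilon> * \<bar>h\<bar>"
        using inner[OF s] .
    qed
    also have "3 * (3 * \<epsilon> * \<bar>h\<bar>) * \<bar>h\<bar> = 9 * \<epsilon> * (h * h)"
      using abs_mult_self_eq[of h] by (simp add: algebra_simps)
    finally show "norm (f (setc i (coord i p + h) (setc j (coord j p + h) p))
         - f (setc i (coord i p + h) (setc j (coord j p) p))
         - (f (setc i (coord i p) (setc j (coord j p + h) p)) - f (setc i (coord i p) (setc j (coord j p) p)))
         - (h * h) *\<^sub>R pd j (pd i f) p) \<le> 9 * \<epsilon> * (h * h)"
      by (simp add: \<Phi>_def x0_def y0_def F_def)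
  qed
qed

lemma Ck2_pd_commute:
  fixes f :: "pt \<Rightarrow> 'a::real_normed_vector"
  assumes U: "open U" and f: "Ck 2 U f" and p: "p \<in> U" and ij: "i < 3" "j < 3"
  shows "pd i (pd j f) p = pd j (pd i f) p"
proof (cases "i = j")
  case False
  define D where "D = norm (pd j (pd i f) p - pd i (pd j f) p)"
  have D_small: "D \<le> 18 * \<epsilon>" if e: "\<epsilon> > 0" for \<epsilon>
  proof -
    have c: "setc j a (setc i b p) = setc i b (setc j a p)" for a b
      using setc_commute[OF ij(2,1)] False by simp
    obtain d1 where d1: "d1 > 0" and E1: "\<And>h. \<bar>h\<bar> < d1 \<Longrightarrow>
       norm (f (setc i (coord i p + h) (setc j (coord j p + h) p))
           - f (setc i (coord i p + h) (setc j (coord j p) p))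
           - (f (setc i (coord i p) (setc j (coord j p + h) p)) - f (setc i (coord i p) (setc j (coord j p) p)))
           - (h * h) *\<^sub>R pd j (pd i f) p) \<le> 9 * \<epsilon> * (h * h)"
      using second_difference_estimate[OF U f p ij False e] by blast
    obtain d2 where d2: "d2 > 0" and E2: "\<And>h. \<bar>h\<bar> < d2 \<Longrightarrow>
       norm (f (setc i (coord i p + h) (setc j (coord j p + h) p))
           - f (setc i (coord i p) (setc j (coord j p + h) p))
           - (f (setc i (coord i p + h) (setc j (coord j p) p)) - f (setc i (coord i p) (setc j (coord j p) p)))
           - (h * h) *\<^sub>R pd i (pd j f) p) \<le> 9 * \<epsilon> * (h * h)"
      using second_difference_estimate[OF U f p ij(2,1) _ e] False by (metis c)
    define h where "h = min d1 d2 / 2"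
    have h: "h * h > 0" "\<bar>h\<bar> < d1" "\<bar>h\<bar> < d2" using d1 d2 by (auto simp: h_def)
    define \<Delta> where "\<Delta> = f (setc i (coord i p + h) (setc j (coord j p + h) p))
         - f (setc i (coord i p + h) (setc j (coord j p) p))
         - (f (setc i (coord i p) (setc j (coord j p + h) p)) - f (setc i (coord i p) (setc j (coord j p) p)))"
    have "(h * h) * D = norm ((\<Delta> - (h * h) *\<^sub>R pd i (pd j f) p) - (\<Delta> - (h * h) *\<^sub>R pd j (pd i f) p))"
      by (simp add: D_def scaleR_diff_right[symmetric] abs_mult_self_eq)
    also have "\<dots> \<le> norm (\<Delta> - (h * h) *\<^sub>R pd i (pd j f) p) + norm (\<Delta> - (h * h) *\<^sub>R pd j (pd i f) p)"
      by (rule norm_triangle_ineq4)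
    also have "\<dots> \<le> 18 * \<epsilon> * (h * h)"
      using E1[OF h(2)] E2[OF h(3)] by (simp add: \<Delta>_def algebra_simps)
    finally have "(h * h) * D \<le> (h * h) * (18 * \<epsilon>)" by (simp only: mult_ac)
    then show ?thesis by (simp only: mult_le_cancel_left_pos[OF h(1)])
  qed
  have "D \<le> 0 + e" if "e > 0" for e
    using D_small[of "e / 18"] that by simp
  then have "D \<le> 0" by (rule field_le_epsilon)
  then show ?thesis by (simp add: D_def)
qed simp

lemma smooth_Ck: "smooth_fn U f \<Longrightarrow> Ck k U f"
  by (simp add: smooth_fn_def)

lemma smooth_add: "open U \<Longrightarrow> smooth_fn U f \<Longrightarrow> smooth_fn U g \<Longrightarrow> smooth_fn U (\<lambda>q. f q + g q)"
  unfolding smooth_fn_def using Ck_add by blast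

lemma smooth_diff: "open U \<Longrightarrow> smooth_fn U f \<Longrightarrow> smooth_fn U g \<Longrightarrow> smooth_fn U (\<lambda>q. f q - g q)"
  unfolding smooth_fn_def using Ck_diff by blast

lemma smooth_uminus: "open U \<Longrightarrow> smooth_fn U f \<Longrightarrow> smooth_fn U (\<lambda>q. - f q)"
  unfolding smooth_fn_def using Ck_uminus by blast

lemma (in bounded_bilinear) smooth_prod:
  "open U \<Longrightarrow> smooth_fn U f \<Longrightarrow> smooth_fn U g \<Longrightarrow> smooth_fn U (\<lambda>q. prod (f q) (g q))"
  unfolding smooth_fn_def using Ck_prod by blast

lemmas smooth_mult = bounded_bilinear.smooth_prod[OF bounded_bilinear_mult]
lemmas smooth_scaleR = bounded_bilinear.smooth_prod[OF bounded_bilinear_scaleR]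
lemmas smooth_inner = bounded_bilinear.smooth_prod[OF bounded_bilinear_inner]

lemma bounded_bilinear_cross3: "bounded_bilinear (cross3 :: real^3 \<Rightarrow> real^3 \<Rightarrow> real^3)"
proof (rule bounded_bilinear.intro)
  show "\<exists>K. \<forall>a b. norm (cross3 a b) \<le> norm a * norm b * K"
  proof (intro exI allI)
    fix a b :: "real^3"
    have "(norm (cross3 a b))\<^sup>2 \<le> (norm a * norm b)\<^sup>2"
      using norm_cross_dot[of a b] by (metis le_add_same_cancel1 zero_le_power2)
    then show "norm (cross3 a b) \<le> norm a * norm b * 1"
      by (simp add: power2_le_iff_abs_le)
  qed
qed (simp_all add: cross_add_left cross_add_right cross_mult_left cross_mult_right)

lemmas smooth_cross3 = bounded_bilinear.smooth_prod[OF bounded_bilinear_cross3]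

lemma smooth_sum:
  "open U \<Longrightarrow> finite A \<Longrightarrow> (\<And>x. x \<in> A \<Longrightarrow> smooth_fn U (f x)) \<Longrightarrow> smooth_fn U (\<lambda>q. \<Sum>x\<in>A. f x q)"
  unfolding smooth_fn_def using Ck_sum by blast

lemma smooth_inverse:
  "open U \<Longrightarrow> \<forall>q\<in>U. f q \<noteq> 0 \<Longrightarrow> smooth_fn U f \<Longrightarrow> smooth_fn U (\<lambda>q. inverse (f q :: real))"
  unfolding smooth_fn_def using Ck_inverse by blast

lemma smooth_sqrt: "open U \<Longrightarrow> \<forall>q\<in>U. f q > 0 \<Longrightarrow> smooth_fn U f \<Longrightarrow> smooth_fn U (\<lambda>q. sqrt (f q))"
  unfolding smooth_fn_def using Ck_sqrt by blast

lemma smooth_pd: "smooth_fn U f \<Longrightarrow> i < 3 \<Longrightarrow> smooth_fn U (pd i f)"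
  unfolding smooth_fn_def by (metis Ck.simps(2))

lemma smooth_has_pd:
  "smooth_fn U f \<Longrightarrow> p \<in> U \<Longrightarrow> i < 3 \<Longrightarrow>
   ((\<lambda>s. f (setc i s p)) has_vector_derivative pd i f p) (at (coord i p))"
  by (rule Ck_has_pd[OF smooth_Ck])

lemma (in bounded_bilinear) pd_prod:
  "smooth_fn U f \<Longrightarrow> smooth_fn U g \<Longrightarrow> p \<in> U \<Longrightarrow> i < 3 \<Longrightarrow>
   pd i (\<lambda>q. prod (f q) (g q)) p = prod (f p) (pd i g p) + prod (pd i f p) (g p)"
  by (rule pd_eqI) (use has_vector_derivative[OF smooth_has_pd smooth_has_pd] in simp)

lemmas pd_mult = bounded_bilinear.pd_prod[OF bounded_bilinear_mult]
lemmas pd_inner = bounded_bilinear.pd_prod[OF bounded_bilinear_inner]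

lemma pd_add:
  "smooth_fn U f \<Longrightarrow> smooth_fn U g \<Longrightarrow> p \<in> U \<Longrightarrow> i < 3 \<Longrightarrow>
   pd i (\<lambda>q. f q + g q) p = pd i f p + pd i g p"
  by (rule pd_eqI, rule has_vector_derivative_add[OF smooth_has_pd smooth_has_pd])

lemma pd_diff:
  "smooth_fn U f \<Longrightarrow> smooth_fn U g \<Longrightarrow> p \<in> U \<Longrightarrow> i < 3 \<Longrightarrow>
   pd i (\<lambda>q. f q - g q) p = pd i f p - pd i g p"
  by (rule pd_eqI, rule has_vector_derivative_diff[OF smooth_has_pd smooth_has_pd])

lemma pd_sum:
  "(\<And>x. x \<in> A \<Longrightarrow> smooth_fn U (f x)) \<Longrightarrow> p \<in> U \<Longrightarrow> i < 3 \<Longrightarrow>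
   pd i (\<lambda>q. \<Sum>x\<in>A. f x q) p = (\<Sum>x\<in>A. pd i (f x) p)"
  by (rule pd_eqI, rule has_vector_derivative_sum, rule smooth_has_pd) auto

lemma pd_eq_0_if_constant_on: "open U \<Longrightarrow> p \<in> U \<Longrightarrow> i < 3 \<Longrightarrow> \<forall>q\<in>U. f q = c \<Longrightarrow> pd i f p = 0"
  using pd_cong[of U p i f "\<lambda>q. c"] pd_eqI[of "\<lambda>q. c" i p 0] by simp

lemma pd_inner_swap_if_constant_on:
  assumes "open U" "smooth_fn U f" "smooth_fn U g" "p \<in> U" "i < 3" "\<forall>q\<in>U. f q \<bullet> g q = c"
  shows "pd i f p \<bullet> g p = - (f p \<bullet> pd i g p)"
  using pd_eq_0_if_constant_on[OF assms(1,4,5,6)] pd_inner[OF assms(2-5)] by simp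

lemma smooth_pd_commute:
  "open U \<Longrightarrow> smooth_fn U f \<Longrightarrow> p \<in> U \<Longrightarrow> i < 3 \<Longrightarrow> j < 3 \<Longrightarrow> pd i (pd j f) p = pd j (pd i f) p"
  by (rule Ck2_pd_commute) (auto simp: smooth_fn_def)

section \<open>The moving frame\<close>

lemma sum_lessThan_2: "(\<Sum>x<(2::nat). f x) = f 0 + f 1"
  by (simp add: numeral_2_eq_2)

lemma less_2_cases: "(a::nat) < 2 \<Longrightarrow> a = 0 \<or> a = 1" by auto

lemma cross3_cross3_left: "cross3 (cross3 a b) c = (a \<bullet> c) *\<^sub>R b - (b \<bullet> c) *\<^sub>R a"
  using cross_skew[of "cross3 a b" c] by (simp add: Lagrange inner_commute)

lemma orthogonal_frame_eq_0:
  fixes u x y :: "real^3"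
  assumes "u \<bullet> x = 0" "u \<bullet> y = 0" "u \<bullet> cross3 x y = 0" "cross3 x y \<noteq> 0"
  shows "u = 0"
proof -
  define c where "c = cross3 x y"
  have "cross3 c u = 0"
    using assms(1,2) cross3_cross3_left[of x y u] by (simp add: c_def inner_commute)
  then have "(c \<bullet> c) *\<^sub>R u = 0"
    using cross3_cross3_left[of c u c] assms(3) by (simp add: c_def)
  then show ?thesis using assms(4) by (simp add: c_def)
qed

locale moving_surface =
  fixes R :: "pt \<Rightarrow> real^3" and U :: "pt set"
  assumes open_U: "open U" and smooth_R: "smooth_fn U R"
    and regular: "\<forall>p\<in>U. cross3 (Sv R 0 p) (Sv R 1 p) \<noteq> 0"
begin

lemma smooth_Sv: "a < 3 \<Longrightarrow> smooth_fn U (Sv R a)"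
  unfolding Sv_def by (rule smooth_pd[OF smooth_R])

lemma smooth_Vel: "smooth_fn U (Vel R)"
  unfolding Vel_def[abs_def] using smooth_pd[OF smooth_R, of 2] by simp

lemma smooth_metric: "a < 3 \<Longrightarrow> b < 3 \<Longrightarrow> smooth_fn U (metric R a b)"
  unfolding metric_def[abs_def] by (intro smooth_inner open_U smooth_Sv)

lemma metric_det_eq: "metric_det R p = (norm (cross3 (Sv R 0 p) (Sv R 1 p)))\<^sup>2"
  using norm_cross[of "Sv R 0 p" "Sv R 1 p"] unfolding power2_norm_eq_inner
  by (simp add: metric_det_def metric_def inner_commute power2_eq_square)

lemma metric_det_pos: "p \<in> U \<Longrightarrow> metric_det R p > 0"
  using regular unfolding metric_det_eq by simp

lemma smooth_metric_inv: "a < 2 \<Longrightarrow> b < 2 \<Longrightarrow> smooth_fn U (metric_inv R a b)"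
proof -
  assume ab: "a < 2" "b < 2"
  have numerator: "smooth_fn U (\<lambda>p. if a = b then metric R (1 - a) (1 - a) p else - metric R a b p)"
    using ab by (cases "a = b") (auto intro!: smooth_metric smooth_uminus open_U)
  have "smooth_fn U (\<lambda>p. inverse (metric_det R p))"
    using metric_det_pos unfolding metric_det_def[abs_def]
    by (intro smooth_inverse smooth_diff smooth_mult open_U smooth_metric)
       (auto simp: less_imp_neq[symmetric])
  from smooth_mult[OF open_U numerator this] show ?thesis
    by (simp add: metric_inv_def[abs_def] divide_inverse)
qed

lemma smooth_Sup: "a < 2 \<Longrightarrow> smooth_fn U (Sup R a)"
  unfolding Sup_def[abs_def] by (intro smooth_sum smooth_scaleR open_U smooth_metric_inv smooth_Sv) auto

lemma smooth_Nrm: "smooth_fn U (Nrm R)"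
proof -
  define c where "c p = cross3 (Sv R 0 p) (Sv R 1 p)" for p
  have c: "smooth_fn U c" unfolding c_def by (intro smooth_cross3 open_U smooth_Sv) auto
  have "smooth_fn U (\<lambda>p. inverse (sqrt (c p \<bullet> c p)) *\<^sub>R c p)"
    using regular by (intro smooth_scaleR smooth_inverse smooth_sqrt smooth_inner open_U c)
      (auto simp: c_def)
  then show ?thesis by (simp add: Nrm_def[abs_def] c_def Let_def norm_eq_sqrt_inner divide_inverse_commute)
qed

lemma smooth_Chr: "c < 2 \<Longrightarrow> i < 3 \<Longrightarrow> g < 3 \<Longrightarrow> smooth_fn U (Chr R c i g)"
  unfolding Chr_def[abs_def] by (intro smooth_inner open_U smooth_Sup smooth_pd smooth_Sv)

lemma smooth_Bcurv: "a < 3 \<Longrightarrow> b < 3 \<Longrightarrow> smooth_fn U (Bcurv R a b)"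
  unfolding Bcurv_def[abs_def] cov_basis_def
  by (intro smooth_inner smooth_diff smooth_sum smooth_scaleR open_U smooth_Nrm smooth_pd
      smooth_Sv smooth_Chr) auto

lemma smooth_Bmixed: "b < 2 \<Longrightarrow> a < 3 \<Longrightarrow> smooth_fn U (Bmixed R b a)"
  unfolding Bmixed_def[abs_def] by (intro smooth_sum smooth_mult open_U smooth_metric_inv smooth_Bcurv) auto

lemma smooth_Cn: "smooth_fn U (Cn R)"
  unfolding Cn_def[abs_def] by (intro smooth_inner open_U smooth_Vel smooth_Nrm)

lemma smooth_Vup: "a < 2 \<Longrightarrow> smooth_fn U (Vup R a)"
  unfolding Vup_def[abs_def] by (intro smooth_inner open_U smooth_Vel smooth_Sup)

lemma smooth_cov_up:
  "(\<forall>c<2. smooth_fn U (psi c)) \<Longrightarrow> a < 3 \<Longrightarrow> b < 2 \<Longrightarrow> smooth_fn U (cov_up R a psi b)"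
  unfolding cov_up_def[abs_def]
  by (intro smooth_add smooth_sum smooth_mult open_U smooth_pd smooth_Chr) auto

lemma smooth_Chr_dot: "a < 2 \<Longrightarrow> b < 2 \<Longrightarrow> smooth_fn U (Chr_dot R a b)"
  unfolding Chr_dot_def[abs_def]
  by (intro smooth_diff smooth_mult open_U smooth_cov_up smooth_Vup smooth_Cn smooth_Bmixed)
     (auto intro: smooth_Vup)

end

lemma symmetric_2x2_inverse:
  fixes x y z :: real
  assumes "x * z - y * y \<noteq> 0"
  defines "d \<equiv> x * z - y * y"
  shows "z / d * x + - y / d * y = 1" "z / d * y + - y / d * z = 0"
    and "- y / d * x + x / d * y = 0" "- y / d * y + x / d * z = 1"
    and "x * (z / d) + y * (- y / d) = 1" "x * (- y / d) + y * (x / d) = 0"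
    and "y * (z / d) + z * (- y / d) = 0" "y * (- y / d) + z * (x / d) = 1"
proof -
  have "d \<noteq> 0" using assms by simp
  then show "z / d * x + - y / d * y = 1" "z / d * y + - y / d * z = 0"
    and "- y / d * x + x / d * y = 0" "- y / d * y + x / d * z = 1"
    and "x * (z / d) + y * (- y / d) = 1" "x * (- y / d) + y * (x / d) = 0"
    and "y * (z / d) + z * (- y / d) = 0" "y * (- y / d) + z * (x / d) = 1"
    by (simp_all add: field_simps) (simp_all add: d_def algebra_simps)
qed

context moving_surface
begin

lemma metric_commute: "metric R a b p = metric R b a p"
  by (simp add: metric_def inner_commute)

lemma metric_inv_commute: "metric_inv R a b p = metric_inv R b a p"
  by (simp add: metric_inv_def metric_commute)

lemma metric_inv_explicit:
  "metric_inv R 0 0 p = metric R 1 1 p / metric_det R p"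
  "metric_inv R 0 1 p = - metric R 0 1 p / metric_det R p"
  "metric_inv R 1 0 p = - metric R 0 1 p / metric_det R p"
  "metric_inv R 1 1 p = metric R 0 0 p / metric_det R p"
  "metric_det R p = metric R 0 0 p * metric R 1 1 p - metric R 0 1 p * metric R 0 1 p"
  by (simp_all add: metric_inv_def metric_det_def metric_commute[of "Suc 0" 0])

lemma metric_inv_metric:
  assumes "p \<in> U" "a < 2" "b < 2"
  shows "(\<Sum>c<2. metric_inv R a c p * metric R c b p) = (if a = b then 1 else 0)"
    and "(\<Sum>c<2. metric R a c p * metric_inv R c b p) = (if a = b then 1 else 0)"
proof -
  have "metric R 0 0 p * metric R 1 1 p - metric R 0 1 p * metric R 0 1 p \<noteq> 0"
    using metric_det_pos[OF assms(1)] metric_inv_explicit(5) by simp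
  note inv = symmetric_2x2_inverse[OF this]
  show "(\<Sum>c<2. metric_inv R a c p * metric R c b p) = (if a = b then 1 else 0)"
    and "(\<Sum>c<2. metric R a c p * metric_inv R c b p) = (if a = b then 1 else 0)"
    using assms(2,3) inv metric_commute[of "Suc 0" 0 p]
    by (auto dest!: less_2_cases simp only: sum_lessThan_2 metric_inv_explicit) simp_all
qed


lemma Sup_inner_Sv: "p \<in> U \<Longrightarrow> a < 2 \<Longrightarrow> b < 2 \<Longrightarrow> Sup R a p \<bullet> Sv R b p = (if a = b then 1 else 0)"
  using metric_inv_metric(1) by (simp add: Sup_def inner_sum_left metric_def)

lemma Sv_eq_sum_Sup: "p \<in> U \<Longrightarrow> b < 2 \<Longrightarrow> Sv R b p = (\<Sum>c<2. metric R b c p *\<^sub>R Sup R c p)"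
proof -
  assume h: "p \<in> U" "b < 2"
  have "(\<Sum>c<2. metric R b c p *\<^sub>R Sup R c p)
      = (\<Sum>c<2. metric R b c p * metric_inv R c 0 p) *\<^sub>R Sv R 0 p
        + (\<Sum>c<2. metric R b c p * metric_inv R c 1 p) *\<^sub>R Sv R 1 p"
    by (simp add: Sup_def sum_lessThan_2 algebra_simps)
  also have "\<dots> = Sv R b p" using metric_inv_metric(2)[OF h] h(2) by (auto dest!: less_2_cases)
  finally show ?thesis by simp
qed

lemma metric_inv_eq_inner_Sup: "p \<in> U \<Longrightarrow> a < 2 \<Longrightarrow> b < 2 \<Longrightarrow> metric_inv R a b p = Sup R a p \<bullet> Sup R b p"
proof -
  assume h: "p \<in> U" "a < 2" "b < 2"
  have "Sup R a p \<bullet> Sup R b p = (\<Sum>c<2. metric_inv R a c p * (Sup R b p \<bullet> Sv R c p))"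
    by (simp add: Sup_def[of R a] inner_sum_right inner_commute)
  also have "\<dots> = metric_inv R a b p"
    using h Sup_inner_Sv[OF h(1) h(3)] by (auto dest!: less_2_cases simp: sum_lessThan_2)
  finally show ?thesis by simp
qed

lemma Nrm_inner_Sv: "a < 2 \<Longrightarrow> Nrm R p \<bullet> Sv R a p = 0"
  by (auto dest!: less_2_cases simp: Nrm_def Let_def dot_cross_self inner_commute)

lemma Nrm_inner_Nrm: "p \<in> U \<Longrightarrow> Nrm R p \<bullet> Nrm R p = 1"
  using regular by (simp add: Nrm_def Let_def power2_norm_eq_inner[symmetric] norm_sgn
      sgn_div_norm[symmetric])

lemma Sup_inner_Nrm: "Sup R a p \<bullet> Nrm R p = 0"
  by (simp add: Sup_def inner_sum_left inner_commute[of "Sv R _ p"] Nrm_inner_Sv)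

lemma Nrm_inner_Sup: "Nrm R p \<bullet> Sup R a p = 0"
  using Sup_inner_Nrm by (simp add: inner_commute)

lemma frame_decomposition:
  assumes p: "p \<in> U"
  shows "w = (\<Sum>c<2. (Sup R c p \<bullet> w) *\<^sub>R Sv R c p) + (Nrm R p \<bullet> w) *\<^sub>R Nrm R p"
proof -
  define u where "u = w - ((\<Sum>c<2. (Sup R c p \<bullet> w) *\<^sub>R Sv R c p) + (Nrm R p \<bullet> w) *\<^sub>R Nrm R p)"
  have u_Sv: "u \<bullet> Sv R b p = 0" if b: "b < 2" for b
  proof -
    have "u \<bullet> Sv R b p = w \<bullet> Sv R b p - (\<Sum>c<2. (Sup R c p \<bullet> w) * metric R c b p)"
      by (simp add: u_def inner_diff_left inner_add_left inner_sum_left Nrm_inner_Sv[OF b] metric_def)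
    also have "(\<Sum>c<2. (Sup R c p \<bullet> w) * metric R c b p) = (\<Sum>c<2. metric R b c p *\<^sub>R Sup R c p) \<bullet> w"
      by (simp add: inner_sum_left metric_commute mult.commute)
    also have "\<dots> = Sv R b p \<bullet> w" using Sv_eq_sum_Sup[OF p b] by simp
    finally show ?thesis by (simp add: inner_commute)
  qed
  have "u \<bullet> Nrm R p = Nrm R p \<bullet> u" by (rule inner_commute)
  also have "\<dots> = 0"
    by (simp add: u_def inner_diff_right inner_add_right sum_lessThan_2 Nrm_inner_Sv Nrm_inner_Nrm[OF p])
  finally have u_Nrm: "u \<bullet> Nrm R p = 0" .
  have "cross3 (Sv R 0 p) (Sv R 1 p) = norm (cross3 (Sv R 0 p) (Sv R 1 p)) *\<^sub>R Nrm R p"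
    using regular p by (simp add: Nrm_def Let_def)
  then have "u \<bullet> cross3 (Sv R 0 p) (Sv R 1 p) = 0"
    using u_Nrm by (metis inner_scaleR_right mult_zero_right)
  then have "u = 0" using orthogonal_frame_eq_0[OF u_Sv[of 0] u_Sv[of 1]] regular p by simp
  then show ?thesis by (simp add: u_def)
qed

end
section \<open>Gauss and Codazzi equations with a time index\<close>

text \<open>\<open>Bst R i g = N \<cdot> \<partial>\<^sub>i S\<^sub>g\<close> is the curvature tensor with the time index 2 admitted, and
  \<open>Bst_up R b j = S\<^sup>b\<^sup>c Bst R j c\<close> its mixed form.\<close>

definition Bst :: "(pt \<Rightarrow> real^3) \<Rightarrow> nat \<Rightarrow> nat \<Rightarrow> pt \<Rightarrow> real" where
  "Bst R i g p = Nrm R p \<bullet> pd i (Sv R g) p"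

definition Bst_up :: "(pt \<Rightarrow> real^3) \<Rightarrow> nat \<Rightarrow> nat \<Rightarrow> pt \<Rightarrow> real" where
  "Bst_up R b j p = (\<Sum>c<2. metric_inv R b c p * Bst R j c p)"

definition cov_Bst :: "(pt \<Rightarrow> real^3) \<Rightarrow> nat \<Rightarrow> nat \<Rightarrow> nat \<Rightarrow> pt \<Rightarrow> real" where
  "cov_Bst R d a g p = pd d (Bst R a g) p - (\<Sum>e<2. Chr R e d a p * Bst R e g p)
                                     - (\<Sum>e<2. Chr R e d g p * Bst R a e p)"

context moving_surface
begin

lemma Chr_fun: "Chr R c i g = (\<lambda>q. Sup R c q \<bullet> pd i (Sv R g) q)"
  by (rule ext) (simp add: Chr_def)

lemma Bst_fun: "Bst R i g = (\<lambda>q. Nrm R q \<bullet> pd i (Sv R g) q)"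
  by (rule ext) (simp add: Bst_def)

lemma smooth_Bst: "i < 3 \<Longrightarrow> g < 3 \<Longrightarrow> smooth_fn U (Bst R i g)"
  unfolding Bst_fun by (intro smooth_inner open_U smooth_Nrm smooth_pd smooth_Sv)

lemma pd_Sup_inner_Sv: "p \<in> U \<Longrightarrow> b < 2 \<Longrightarrow> c < 2 \<Longrightarrow> j < 3 \<Longrightarrow>
    pd j (Sup R b) p \<bullet> Sv R c p = - (Sup R b p \<bullet> pd j (Sv R c) p)"
  using Sup_inner_Sv
  by (intro pd_inner_swap_if_constant_on[OF open_U smooth_Sup smooth_Sv, of b c p j "if b = c then 1 else 0"])
    auto

lemma pd_Nrm_inner_Sv: "p \<in> U \<Longrightarrow> c < 2 \<Longrightarrow> j < 3 \<Longrightarrow> pd j (Nrm R) p \<bullet> Sv R c p = - Bst R j c p"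
  using pd_inner_swap_if_constant_on[OF open_U smooth_Nrm smooth_Sv, of c p j 0] Nrm_inner_Sv
  by (simp add: Bst_def)

lemma pd_Nrm_inner_Nrm: "p \<in> U \<Longrightarrow> j < 3 \<Longrightarrow> pd j (Nrm R) p \<bullet> Nrm R p = 0"
  using pd_inner_swap_if_constant_on[OF open_U smooth_Nrm smooth_Nrm, of p j 1] Nrm_inner_Nrm
  by (simp add: inner_commute)

lemma pd_Nrm_inner: "p \<in> U \<Longrightarrow> j < 3 \<Longrightarrow>
    pd j (Nrm R) p \<bullet> w = - (\<Sum>c<2. (Sup R c p \<bullet> w) * Bst R j c p)"
proof -
  assume h: "p \<in> U" "j < 3"
  have "pd j (Nrm R) p \<bullet> w = pd j (Nrm R) p \<bullet>
      ((\<Sum>c<2. (Sup R c p \<bullet> w) *\<^sub>R Sv R c p) + (Nrm R p \<bullet> w) *\<^sub>R Nrm R p)"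
    using frame_decomposition[OF h(1), of w] by simp
  also have "\<dots> = - (\<Sum>c<2. (Sup R c p \<bullet> w) * Bst R j c p)"
    using h by (simp add: inner_add_right sum_lessThan_2 pd_Nrm_inner_Sv pd_Nrm_inner_Nrm)
  finally show ?thesis .
qed

lemma pd_Sup_inner_Nrm: "p \<in> U \<Longrightarrow> b < 2 \<Longrightarrow> j < 3 \<Longrightarrow> pd j (Sup R b) p \<bullet> Nrm R p = Bst_up R b j p"
proof -
  assume h: "p \<in> U" "b < 2" "j < 3"
  have "Sv R c p \<bullet> pd j (Nrm R) p = - Bst R j c p" if "c < 2" for c
    using pd_Nrm_inner_Sv[OF h(1) that h(3)] by (simp add: inner_commute)
  then have "- (Sup R b p \<bullet> pd j (Nrm R) p) = Bst_up R b j p"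
    by (simp add: Sup_def inner_add_left sum_lessThan_2 Bst_up_def)
  then show ?thesis
    using pd_inner_swap_if_constant_on[OF open_U smooth_Sup smooth_Nrm, of b p j 0] Sup_inner_Nrm h
    by simp
qed

lemma pd_Sup_inner: "p \<in> U \<Longrightarrow> b < 2 \<Longrightarrow> j < 3 \<Longrightarrow>
    pd j (Sup R b) p \<bullet> w = - (\<Sum>c<2. (Sup R c p \<bullet> w) * Chr R b j c p) + (Nrm R p \<bullet> w) * Bst_up R b j p"
proof -
  assume h: "p \<in> U" "b < 2" "j < 3"
  have "pd j (Sup R b) p \<bullet> w = pd j (Sup R b) p \<bullet>
      ((\<Sum>c<2. (Sup R c p \<bullet> w) *\<^sub>R Sv R c p) + (Nrm R p \<bullet> w) *\<^sub>R Nrm R p)"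
    using frame_decomposition[OF h(1), of w] by simp
  also have "\<dots> = - (\<Sum>c<2. (Sup R c p \<bullet> w) * Chr R b j c p) + (Nrm R p \<bullet> w) * Bst_up R b j p"
    using h by (simp add: inner_add_right sum_lessThan_2 pd_Sup_inner_Sv pd_Sup_inner_Nrm Chr_def)
  finally show ?thesis .
qed

lemma pd_Chr: "p \<in> U \<Longrightarrow> b < 2 \<Longrightarrow> i < 3 \<Longrightarrow> j < 3 \<Longrightarrow> g < 3 \<Longrightarrow>
   pd j (Chr R b i g) p = Sup R b p \<bullet> pd j (pd i (Sv R g)) p
      - (\<Sum>c<2. Chr R c i g p * Chr R b j c p) + Bst R i g p * Bst_up R b j p"
proof -
  assume h: "p \<in> U" "b < 2" "i < 3" "j < 3" "g < 3"
  have "pd j (Chr R b i g) p = Sup R b p \<bullet> pd j (pd i (Sv R g)) p + pd j (Sup R b) p \<bullet> pd i (Sv R g) p"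
    unfolding Chr_fun using h by (intro pd_inner[where U = U] smooth_Sup smooth_pd smooth_Sv) auto
  also have "pd j (Sup R b) p \<bullet> pd i (Sv R g) p = - (\<Sum>c<2. Chr R c i g p * Chr R b j c p) + Bst R i g p * Bst_up R b j p"
    using pd_Sup_inner[OF h(1,2,4)] by (simp add: Chr_def Bst_def)
  finally show ?thesis by simp
qed

lemma gauss_equation: "p \<in> U \<Longrightarrow> b < 2 \<Longrightarrow> i < 3 \<Longrightarrow> j < 3 \<Longrightarrow> g < 3 \<Longrightarrow>
   pd j (Chr R b i g) p - pd i (Chr R b j g) p
     + (\<Sum>e<2. Chr R b j e p * Chr R e i g p) - (\<Sum>e<2. Chr R b i e p * Chr R e j g p)
   = Bst R i g p * Bst_up R b j p - Bst R j g p * Bst_up R b i p"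
proof -
  assume h: "p \<in> U" "b < 2" "i < 3" "j < 3" "g < 3"
  have c: "pd j (pd i (Sv R g)) p = pd i (pd j (Sv R g)) p"
    using h by (intro smooth_pd_commute[OF open_U]) (auto intro: smooth_Sv)
  show ?thesis using pd_Chr[OF h] pd_Chr[OF h(1,2,4,3,5)] c by (simp add: sum_lessThan_2 algebra_simps)
qed

lemma codazzi_equation: "p \<in> U \<Longrightarrow> i < 3 \<Longrightarrow> j < 3 \<Longrightarrow> g < 3 \<Longrightarrow>
   pd j (Bst R i g) p + (\<Sum>c<2. Chr R c i g p * Bst R j c p)
   = pd i (Bst R j g) p + (\<Sum>c<2. Chr R c j g p * Bst R i c p)"
proof -
  assume h: "p \<in> U" "i < 3" "j < 3" "g < 3"
  have T: "pd j (Bst R i g) p = Nrm R p \<bullet> pd j (pd i (Sv R g)) p - (\<Sum>c<2. Chr R c i g p * Bst R j c p)"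
    if "i < 3" "j < 3" for i j
  proof -
    have "pd j (Bst R i g) p = Nrm R p \<bullet> pd j (pd i (Sv R g)) p + pd j (Nrm R) p \<bullet> pd i (Sv R g) p"
      unfolding Bst_fun using h that by (intro pd_inner[where U = U] smooth_Nrm smooth_pd smooth_Sv) auto
    also have "pd j (Nrm R) p \<bullet> pd i (Sv R g) p = - (\<Sum>c<2. Chr R c i g p * Bst R j c p)"
      using pd_Nrm_inner[OF h(1) that(2)] by (simp add: Chr_def)
    finally show ?thesis by simp
  qed
  have c: "pd j (pd i (Sv R g)) p = pd i (pd j (Sv R g)) p"
    using h by (intro smooth_pd_commute[OF open_U]) (auto intro: smooth_Sv)
  show ?thesis using T[OF h(2,3)] T[OF h(3,2)] c by simp
qed

lemma pd_Sv_commute: "p \<in> U \<Longrightarrow> a < 3 \<Longrightarrow> g < 3 \<Longrightarrow> pd a (Sv R g) p = pd g (Sv R a) p"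
  unfolding Sv_def by (rule smooth_pd_commute[OF open_U smooth_R])

lemma pd_Vel: "p \<in> U \<Longrightarrow> g < 3 \<Longrightarrow> pd g (Vel R) p = pd 2 (Sv R g) p"
  unfolding Vel_def[abs_def] Sv_def by (rule smooth_pd_commute[OF open_U smooth_R]) auto

lemma Chr_commute: "p \<in> U \<Longrightarrow> a < 3 \<Longrightarrow> g < 3 \<Longrightarrow> Chr R c a g p = Chr R c g a p"
  by (simp add: Chr_def pd_Sv_commute)

lemma Bst_commute: "p \<in> U \<Longrightarrow> a < 3 \<Longrightarrow> g < 3 \<Longrightarrow> Bst R a g p = Bst R g a p"
  by (simp add: Bst_def pd_Sv_commute)

lemma Bcurv_eq_Bst: "Bcurv R a g p = Bst R a g p"
  by (simp add: Bcurv_def Bst_def cov_basis_def inner_diff_right inner_sum_right Nrm_inner_Sv)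

lemma Bmixed_eq_Bst_up: "p \<in> U \<Longrightarrow> a < 2 \<Longrightarrow> Bmixed R b a p = Bst_up R b a p"
  by (simp add: Bmixed_def Bst_up_def sum_lessThan_2 Bcurv_eq_Bst Bst_commute)

lemma Chr_dot_eq_Chr_time: "p \<in> U \<Longrightarrow> c < 2 \<Longrightarrow> g < 2 \<Longrightarrow> Chr_dot R c g p = Chr R c 2 g p"
proof -
  assume h: "p \<in> U" "c < 2" "g < 2"
  have v: "pd g (Vup R c) p = Sup R c p \<bullet> pd g (Vel R) p + Vel R p \<bullet> pd g (Sup R c) p"
  proof -
    have "Vup R c = (\<lambda>q. Vel R q \<bullet> Sup R c q)" by (rule ext) (simp add: Vup_def)
    then show ?thesis using h by (simp add: pd_inner[OF smooth_Vel smooth_Sup] inner_commute)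
  qed
  have w: "Vel R p \<bullet> pd g (Sup R c) p = - (\<Sum>e<2. Vup R e p * Chr R c g e p) + Cn R p * Bst_up R c g p"
    using pd_Sup_inner[OF h(1,2), of g "Vel R p"] h by (simp add: inner_commute Vup_def Cn_def)
  show ?thesis using h
    by (simp add: Chr_dot_def cov_up_def v w pd_Vel Chr_def Bmixed_eq_Bst_up sum_lessThan_2 algebra_simps)
qed

lemma Bst_time: "p \<in> U \<Longrightarrow> g < 2 \<Longrightarrow> Bst R 2 g p = pd g (Cn R) p + (\<Sum>d<2. Bst R d g p * Vup R d p)"
proof -
  assume h: "p \<in> U" "g < 2"
  have c: "pd g (Cn R) p = Vel R p \<bullet> pd g (Nrm R) p + pd g (Vel R) p \<bullet> Nrm R p"
  proof -
    have "Cn R = (\<lambda>q. Vel R q \<bullet> Nrm R q)" by (rule ext) (simp add: Cn_def)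
    then show ?thesis using h by (simp add: pd_inner[OF smooth_Vel smooth_Nrm])
  qed
  have w: "Vel R p \<bullet> pd g (Nrm R) p = - (\<Sum>e<2. Vup R e p * Bst R g e p)"
    using pd_Nrm_inner[OF h(1), of g "Vel R p"] h by (simp add: inner_commute Vup_def)
  have e1: "Bst R 2 g p = pd g (Vel R) p \<bullet> Nrm R p" using pd_Vel[OF h(1)] h(2) by (simp add: Bst_def inner_commute)
  have e2: "Bst R g 0 p = Bst R 0 g p" "Bst R g 1 p = Bst R 1 g p"
    using Bst_commute[OF h(1), of g 0] Bst_commute[OF h(1), of g 1] h(2) by auto
  show ?thesis using c w e1 e2 by (simp add: sum_lessThan_2 algebra_simps)
qed


section \<open>The temporal curvature tensor\<close>

lemma Rdot_eq:
  assumes p: "p \<in> U" and abg: "a < 2" "b < 2" "g < 2"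
  shows "Rdot R b a g p = Bcurv R a g p * grad_up R b (Cn R) p - Bmixed R b a p * pd g (Cn R) p"
proof -
  have cd: "pd a (Chr_dot R b g) p = pd a (Chr R b 2 g) p"
    using Chr_dot_eq_Chr_time abg by (intro pd_cong[OF open_U p]) auto
  have cov: "cov_ul R a (Chr_dot R) b g p = pd a (Chr R b 2 g) p
      + (\<Sum>d<2. Chr R b a d p * Chr R d 2 g p) - (\<Sum>d<2. Chr R d a g p * Chr R b 2 d p)"
    using abg by (simp add: cov_ul_def cd sum_lessThan_2 Chr_dot_eq_Chr_time[OF p])
  have riem: "Riem R b g a d p = Bst R d g p * Bst_up R b a p - Bst R a g p * Bst_up R b d p" if "d < 2" for d
    unfolding Riem_def using gauss_equation[OF p abg(2), of d a g] that abg by simp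
  \<comment> \<open>the Gauss equation in the plane of \<open>S\<^sub>a\<close> and the time direction\<close>
  have pd_time_Chr: "pd 2 (Chr R b a g) p = pd a (Chr R b 2 g) p
     - (\<Sum>e<2. Chr R b 2 e p * Chr R e a g p) + (\<Sum>e<2. Chr R b a e p * Chr R e 2 g p)
     + (Bst R a g p * Bst_up R b 2 p - Bst R 2 g p * Bst_up R b a p)"
    using gauss_equation[OF p abg(2), of a 2 g] abg by (simp add: algebra_simps)
  have A: "Rdot R b a g p = Bst R a g p * Bst_up R b 2 p - Bst R 2 g p * Bst_up R b a p
      + (\<Sum>d<2. (Bst R d g p * Bst_up R b a p - Bst R a g p * Bst_up R b d p) * Vup R d p)"
    unfolding Rdot_def pd_time_Chr cov by (simp add: sum_lessThan_2 riem algebra_simps)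
  have s10: "Bst R (Suc 0) 0 p = Bst R 0 (Suc 0) p" using Bst_commute[OF p, of 1 0] by simp
  have B20: "Bst R 2 0 p = pd 0 (Cn R) p + Bst R 0 0 p * Vup R 0 p + Bst R 0 1 p * Vup R 1 p"
    using Bst_time[OF p, of 0] s10 by (simp add: sum_lessThan_2)
  have B21: "Bst R 2 1 p = pd 1 (Cn R) p + Bst R 0 1 p * Vup R 0 p + Bst R 1 1 p * Vup R 1 p"
    using Bst_time[OF p, of 1] by (simp add: sum_lessThan_2)
  have B2g: "Bst R 2 g p = pd g (Cn R) p + Bst R 0 g p * Vup R 0 p + Bst R 1 g p * Vup R 1 p"
    using Bst_time[OF p abg(3)] by (simp add: sum_lessThan_2)
  show ?thesis
    using A B20 B21 B2g abg
    by (simp add: Bcurv_eq_Bst Bmixed_eq_Bst_up[OF p] grad_up_def Bst_up_def sum_lessThan_2 s10 algebra_simps)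
qed


lemma pd_Bst_commute: "p \<in> U \<Longrightarrow> a < 3 \<Longrightarrow> g < 3 \<Longrightarrow> d < 3 \<Longrightarrow> pd d (Bst R a g) p = pd d (Bst R g a) p"
  using Bst_commute by (intro pd_cong[OF open_U]) auto

lemma cov_Bst_commute:
  assumes p: "p \<in> U" and h: "d < 2" "a < 2" "g < 2"
  shows "cov_Bst R d a g p = cov_Bst R g d a p"
proof -
  have cod: "pd d (Bst R g a) p + (\<Sum>c<2. Chr R c g a p * Bst R d c p)
           = pd g (Bst R d a) p + (\<Sum>c<2. Chr R c d a p * Bst R g c p)"
    using codazzi_equation[OF p, of g d a] h by simp
  have S1: "(\<Sum>e<2. Chr R e d a p * Bst R e g p) = (\<Sum>c<2. Chr R c d a p * Bst R g c p)"
    by (rule sum.cong) (use Bst_commute[OF p] h in auto)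
  have S2: "(\<Sum>e<2. Chr R e d g p * Bst R a e p) = (\<Sum>e<2. Chr R e g d p * Bst R e a p)"
    by (rule sum.cong) (use Bst_commute[OF p] Chr_commute[OF p] h in auto)
  have P: "pd d (Bst R a g) p = pd d (Bst R g a) p" using pd_Bst_commute[OF p] h by auto
  show ?thesis unfolding cov_Bst_def using cod S1 S2 P by simp
qed

lemma pd_metric_inv:
  assumes p: "p \<in> U" and h: "b < 2" "c < 2" "g < 3"
  shows "pd g (metric_inv R b c) p = - (\<Sum>e<2. metric_inv R e c p * Chr R b g e p)
                                    - (\<Sum>e<2. metric_inv R e b p * Chr R c g e p)"
proof -
  have "pd g (metric_inv R b c) p = pd g (\<lambda>q. Sup R b q \<bullet> Sup R c q) p"
    using metric_inv_eq_inner_Sup h by (intro pd_cong[OF open_U p]) auto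
  also have "\<dots> = Sup R b p \<bullet> pd g (Sup R c) p + pd g (Sup R b) p \<bullet> Sup R c p"
    using h p by (intro pd_inner[where U = U] smooth_Sup) auto
  also have "pd g (Sup R b) p \<bullet> Sup R c p = - (\<Sum>e<2. metric_inv R e c p * Chr R b g e p)"
    using pd_Sup_inner[OF p h(1,3), of "Sup R c p"] h p by (simp add: Nrm_inner_Sup sum_lessThan_2 metric_inv_eq_inner_Sup)
  also have "Sup R b p \<bullet> pd g (Sup R c) p = - (\<Sum>e<2. metric_inv R e b p * Chr R c g e p)"
    using pd_Sup_inner[OF p h(2,3), of "Sup R b p"] h p by (simp add: Nrm_inner_Sup sum_lessThan_2 metric_inv_eq_inner_Sup inner_commute)
  finally show ?thesis by simp
qed

lemma Bst_up_fun: "Bst_up R b a = (\<lambda>q. \<Sum>c<2. metric_inv R b c q * Bst R a c q)"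
  by (rule ext) (simp add: Bst_up_def)

lemma cov_Bst_up:
  assumes p: "p \<in> U" and h: "a < 2" "b < 2" "g < 2"
  shows "pd g (Bst_up R b a) p + (\<Sum>e<2. Chr R b g e p * Bst_up R e a p) - (\<Sum>e<2. Chr R e g a p * Bst_up R b e p)
       = (\<Sum>d<2. metric_inv R b d p * cov_Bst R g d a p)"
proof -
  have pM: "pd g (Bst_up R b a) p = (\<Sum>c<2. metric_inv R b c p * pd g (Bst R a c) p + pd g (metric_inv R b c) p * Bst R a c p)"
  proof -
    have "pd g (Bst_up R b a) p = (\<Sum>c<2. pd g (\<lambda>q. metric_inv R b c q * Bst R a c q) p)"
      unfolding Bst_up_fun using h p by (intro pd_sum[where U = U] smooth_mult[OF open_U] smooth_metric_inv smooth_Bst) auto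
    also have "\<dots> = (\<Sum>c<2. metric_inv R b c p * pd g (Bst R a c) p + pd g (metric_inv R b c) p * Bst R a c p)"
      by (rule sum.cong) (use h p in \<open>auto intro!: pd_mult smooth_metric_inv smooth_Bst\<close>)
    finally show ?thesis .
  qed
  have r1: "pd g (Bst R a 0) p = pd g (Bst R 0 a) p" "pd g (Bst R a (Suc 0)) p = pd g (Bst R (Suc 0) a) p"
    using pd_Bst_commute[OF p] h by auto
  have r2: "Bst R a 0 p = Bst R 0 a p" "Bst R a (Suc 0) p = Bst R (Suc 0) a p"
    "Bst R (Suc 0) 0 p = Bst R 0 (Suc 0) p"
    using Bst_commute[OF p] h by auto
  have r3: "metric_inv R 0 b p = metric_inv R b 0 p" "metric_inv R (Suc 0) b p = metric_inv R b (Suc 0) p"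
    "metric_inv R (Suc 0) 0 p = metric_inv R 0 (Suc 0) p"
    using metric_inv_commute by auto
  have r4: "Chr R e (Suc 0) 0 p = Chr R e 0 (Suc 0) p" for e
    using Chr_commute[OF p] by auto
  show ?thesis
    unfolding pM using h p
    by (simp add: pd_metric_inv cov_Bst_def Bst_up_def sum_lessThan_2 r1 r2 r3 r4 algebra_simps)
qed


lemma Bcurv_fun: "Bcurv R a g = Bst R a g"
  by (rule ext) (simp add: Bcurv_eq_Bst)

lemma Rdot_divergence_form:
  assumes p: "p \<in> U" and h: "a < 2" "b < 2" "g < 2"
  shows "(\<Sum>d<2. metric_inv R b d p * cov_ll R d (\<lambda>i j q. Cn R q * Bcurv R i j q) a g p)
         - cov_ul R g (\<lambda>i j q. Cn R q * Bmixed R i j q) b a p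
       = Bcurv R a g p * grad_up R b (Cn R) p - Bmixed R b a p * pd g (Cn R) p"
proof -
  have cll: "cov_ll R d (\<lambda>i j q. Cn R q * Bcurv R i j q) a g p = pd d (Cn R) p * Bst R a g p + Cn R p * cov_Bst R d a g p"
    if d: "d < 2" for d
  proof -
    have "pd d (\<lambda>q. Cn R q * Bst R a g q) p = Cn R p * pd d (Bst R a g) p + pd d (Cn R) p * Bst R a g p"
      using h p d by (intro pd_mult[where U = U] smooth_Cn smooth_Bst) auto
    then show ?thesis by (simp add: cov_ll_def cov_Bst_def Bcurv_fun sum_lessThan_2 algebra_simps)
  qed
  have pB: "pd g (Bmixed R b a) p = pd g (Bst_up R b a) p"
    using Bmixed_eq_Bst_up h by (intro pd_cong[OF open_U p]) auto
  have cul: "cov_ul R g (\<lambda>i j q. Cn R q * Bmixed R i j q) b a p = pd g (Cn R) p * Bst_up R b a p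
      + Cn R p * (pd g (Bst_up R b a) p + (\<Sum>e<2. Chr R b g e p * Bst_up R e a p) - (\<Sum>e<2. Chr R e g a p * Bst_up R b e p))"
  proof -
    have "pd g (\<lambda>q. Cn R q * Bmixed R b a q) p = Cn R p * pd g (Bmixed R b a) p + pd g (Cn R) p * Bmixed R b a p"
      using h p by (intro pd_mult[where U = U] smooth_Cn smooth_Bmixed) auto
    then show ?thesis using h p
      by (simp add: cov_ul_def pB Bmixed_eq_Bst_up sum_lessThan_2 algebra_simps)
  qed
  have K0: "cov_Bst R 0 a g p = cov_Bst R g 0 a p" and K1: "cov_Bst R (Suc 0) a g p = cov_Bst R g (Suc 0) a p"
    using cov_Bst_commute[OF p] h by auto
  have c0: "cov_ll R 0 (\<lambda>i j q. Cn R q * Bcurv R i j q) a g p = pd 0 (Cn R) p * Bst R a g p + Cn R p * cov_Bst R 0 a g p"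
    using cll[of 0] by simp
  have c1: "cov_ll R 1 (\<lambda>i j q. Cn R q * Bcurv R i j q) a g p = pd 1 (Cn R) p * Bst R a g p + Cn R p * cov_Bst R 1 a g p"
    using cll[of 1] by simp
  have cul': "cov_ul R g (\<lambda>i j q. Cn R q * Bmixed R i j q) b a p = pd g (Cn R) p * Bst_up R b a p
      + Cn R p * (\<Sum>d<2. metric_inv R b d p * cov_Bst R g d a p)"
      using cul cov_Bst_up[OF p h] by simp
  show ?thesis
    unfolding cul' sum_lessThan_2 c0 c1 using h p
    by (simp add: sum_lessThan_2 K0 K1 grad_up_def Bcurv_eq_Bst Bmixed_eq_Bst_up algebra_simps)
qed


section \<open>Commuting the invariant time derivative with the covariant derivative\<close>

lemma cov_up_fun: "cov_up R a psi b = (\<lambda>q. pd a (psi b) q + (\<Sum>c<2. Chr R b a c q * psi c q))"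
  by (rule ext) (simp add: cov_up_def)

lemma tder_up_fun: "tder_up R psi b = (\<lambda>q. pd 2 (psi b) q - (\<Sum>c<2. Vup R c q * cov_up R c psi b q)
                       + (\<Sum>c<2. Chr_dot R b c q * psi c q))"
  by (rule ext) (simp add: tder_up_def)

lemma pd_cov_up:
  assumes p: "p \<in> U" and ps: "\<forall>c<2. smooth_fn U (psi c)" and h: "i < 3" "a < 3" "b < 2"
  shows "pd i (cov_up R a psi b) p = pd i (pd a (psi b)) p
           + (\<Sum>e<2. Chr R b a e p * pd i (psi e) p + pd i (Chr R b a e) p * psi e p)"
proof -
  have s1: "smooth_fn U (pd a (psi b))" using ps h by (intro smooth_pd) auto
  have s2: "smooth_fn U (\<lambda>q. \<Sum>c<2. Chr R b a c q * psi c q)"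
    using ps h by (intro smooth_sum smooth_mult[OF open_U] smooth_Chr open_U) auto
  have "pd i (cov_up R a psi b) p = pd i (pd a (psi b)) p + pd i (\<lambda>q. \<Sum>c<2. Chr R b a c q * psi c q) p"
    unfolding cov_up_fun using p h by (intro pd_add[where U = U] s1 s2)
  also have "pd i (\<lambda>q. \<Sum>c<2. Chr R b a c q * psi c q) p = (\<Sum>c<2. pd i (\<lambda>q. Chr R b a c q * psi c q) p)"
    using p h ps by (intro pd_sum[where U = U] smooth_mult[OF open_U] smooth_Chr) auto
  also have "\<dots> = (\<Sum>e<2. Chr R b a e p * pd i (psi e) p + pd i (Chr R b a e) p * psi e p)"
    by (rule sum.cong) (use p h ps in \<open>auto intro!: pd_mult smooth_Chr\<close>)
  finally show ?thesis .
qed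

lemma pd_tder_up:
  assumes p: "p \<in> U" and ps: "\<forall>c<2. smooth_fn U (psi c)" and h: "a < 2" "b < 2"
  shows "pd a (tder_up R psi b) p = pd a (pd 2 (psi b)) p
     - (\<Sum>c<2. Vup R c p * pd a (cov_up R c psi b) p + pd a (Vup R c) p * cov_up R c psi b p)
     + (\<Sum>c<2. Chr_dot R b c p * pd a (psi c) p + pd a (Chr_dot R b c) p * psi c p)"
proof -
  have s1: "smooth_fn U (pd 2 (psi b))" using ps h by (intro smooth_pd) auto
  have s2: "smooth_fn U (\<lambda>q. \<Sum>c<2. Vup R c q * cov_up R c psi b q)"
    using ps h by (intro smooth_sum[OF open_U] smooth_mult[OF open_U] smooth_Vup smooth_cov_up) auto
  have s3: "smooth_fn U (\<lambda>q. \<Sum>c<2. Chr_dot R b c q * psi c q)"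
    using ps h by (intro smooth_sum[OF open_U] smooth_mult[OF open_U] smooth_Chr_dot) auto
  have "pd a (tder_up R psi b) p = pd a (pd 2 (psi b)) p - pd a (\<lambda>q. \<Sum>c<2. Vup R c q * cov_up R c psi b q) p
        + pd a (\<lambda>q. \<Sum>c<2. Chr_dot R b c q * psi c q) p"
    unfolding tder_up_fun using p h s1 s2 s3
    by (simp add: pd_add[where U = U] pd_diff[where U = U] smooth_diff[OF open_U])
  also have "pd a (\<lambda>q. \<Sum>c<2. Vup R c q * cov_up R c psi b q) p
      = (\<Sum>c<2. pd a (\<lambda>q. Vup R c q * cov_up R c psi b q) p)"
    using p h ps by (intro pd_sum[where U = U] smooth_mult[OF open_U] smooth_Vup smooth_cov_up) auto
  also have "\<dots> = (\<Sum>c<2. Vup R c p * pd a (cov_up R c psi b) p + pd a (Vup R c) p * cov_up R c psi b p)"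
    by (rule sum.cong) (use p h ps in \<open>auto intro!: pd_mult smooth_Vup smooth_cov_up\<close>)
  also have "pd a (\<lambda>q. \<Sum>c<2. Chr_dot R b c q * psi c q) p
      = (\<Sum>c<2. pd a (\<lambda>q. Chr_dot R b c q * psi c q) p)"
    using p h ps by (intro pd_sum[where U = U] smooth_mult[OF open_U] smooth_Chr_dot) auto
  also have "\<dots> = (\<Sum>c<2. Chr_dot R b c p * pd a (psi c) p + pd a (Chr_dot R b c) p * psi c p)"
    by (rule sum.cong) (use p h ps in \<open>auto intro!: pd_mult smooth_Chr_dot\<close>)
  finally show ?thesis .
qed


lemma commutator_tder_cov_up:
  assumes p: "p \<in> U" and ps: "\<forall>c<2. smooth_fn U (psi c)" and h: "a < 2" "b < 2"
  shows "tder_ul R (\<lambda>i j. cov_up R j psi i) b a p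
              - cov_up R a (tder_up R psi) b p
              - Cn R p * (\<Sum>g<2. Bmixed R g a p * cov_up R g psi b p)
         = (\<Sum>g<2. Rdot R b a g p * psi g p)"
proof -
  have E1: "pd 2 (cov_up R a psi b) p = pd 2 (pd a (psi b)) p
           + (\<Sum>e<2. Chr R b a e p * pd 2 (psi e) p + pd 2 (Chr R b a e) p * psi e p)"
    using pd_cov_up[OF p ps, of 2 a b] h by simp
  have E2: "pd c (cov_up R a psi b) p = pd c (pd a (psi b)) p
           + (\<Sum>e<2. Chr R b a e p * pd c (psi e) p + pd c (Chr R b a e) p * psi e p)" if "c < 2" for c
    using pd_cov_up[OF p ps, of c a b] h that by simp
  have E3: "pd a (tder_up R psi b) p = pd a (pd 2 (psi b)) p
     - (\<Sum>c<2. Vup R c p * pd a (cov_up R c psi b) p + pd a (Vup R c) p * cov_up R c psi b p)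
     + (\<Sum>c<2. Chr_dot R b c p * pd a (psi c) p + pd a (Chr_dot R b c) p * psi c p)"
    by (rule pd_tder_up[OF p ps h])
  have E4: "pd a (cov_up R c psi b) p = pd a (pd c (psi b)) p
           + (\<Sum>e<2. Chr R b c e p * pd a (psi e) p + pd a (Chr R b c e) p * psi e p)" if "c < 2" for c
    using pd_cov_up[OF p ps, of a c b] h that by simp
  have E5: "pd a (Vup R c) p = Chr_dot R c a p - (\<Sum>e<2. Chr R c a e p * Vup R e p) + Cn R p * Bmixed R c a p"
    if "c < 2" for c
    by (simp add: Chr_dot_def cov_up_def)
  have cl2: "pd a (pd 2 (psi b)) p = pd 2 (pd a (psi b)) p"
    using ps h by (intro smooth_pd_commute[OF open_U _ p]) auto
  have cl: "pd a (pd c (psi b)) p = pd c (pd a (psi b)) p" if "c < 2" for c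
    using ps h that by (intro smooth_pd_commute[OF open_U _ p]) auto
  have sA: "Chr R x c a p = Chr R x a c p" if "c < 2" for x c
    using Chr_commute[OF p] h that by simp
  have s10: "Chr R x (Suc 0) 0 p = Chr R x 0 (Suc 0) p" for x
    using Chr_commute[OF p] by simp
  show ?thesis
    using h
    apply (simp only: tder_ul_def cov_ul_def Rdot_def Riem_def sum_lessThan_2)
    apply (simp add: E1 E2 E3 E4 E5 cl2 cl sA s10 cov_up_def tder_up_def sum_lessThan_2 algebra_simps)
    done
qed

end



theorem mainTheorem6:
  fixes R :: "pt \<Rightarrow> real^3" and U :: "pt set"
  assumes "open U"
    and "smooth_fn U R"
    and "\<forall>p\<in>U. cross3 (Sv R 0 p) (Sv R 1 p) \<noteq> 0"
  shows "(\<forall>p\<in>U. \<forall>a<2. \<forall>b<2. \<forall>g<2.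
            Rdot R b a g p
              = (\<Sum>d<2. metric_inv R b d p * cov_ll R d (\<lambda>i j q. Cn R q * Bcurv R i j q) a g p)
                - cov_ul R g (\<lambda>i j q. Cn R q * Bmixed R i j q) b a p
          \<and> Rdot R b a g p
              = Bcurv R a g p * grad_up R b (Cn R) p - Bmixed R b a p * pd g (Cn R) p)
       \<and> (\<forall>psi :: nat \<Rightarrow> pt \<Rightarrow> real. (\<forall>b<2. smooth_fn U (psi b)) \<longrightarrow>
           (\<forall>p\<in>U. \<forall>a<2. \<forall>b<2.
              tder_ul R (\<lambda>i j. cov_up R j psi i) b a p
              - cov_up R a (tder_up R psi) b p
              - Cn R p * (\<Sum>g<2. Bmixed R g a p * cov_up R g psi b p)
              = (\<Sum>g<2. (Bcurv R a g p * grad_up R b (Cn R) p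
                         - Bmixed R b a p * pd g (Cn R) p) * psi g p)))"
proof -
  interpret moving_surface R U
    using assms by unfold_locales
  have "(\<Sum>g<2. Rdot R b a g p * psi g p)
      = (\<Sum>g<2. (Bcurv R a g p * grad_up R b (Cn R) p - Bmixed R b a p * pd g (Cn R) p) * psi g p)"
    if "p \<in> U" "a < 2" "b < 2" for psi p a b
    using Rdot_eq[OF that] by (intro sum.cong) auto
  then show ?thesis
    using Rdot_eq Rdot_divergence_form commutator_tder_cov_up by simp
qed

end
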